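(* Let $G=(V,E)$ be a finite graph and $x_e\in(0,1)$ for each $e\in E$. Let $\Omega=\{0,1\}^E$, $\Sigma\subset\Omega$, $f:\Omega\to2^\Sigma$, $f(\omega)=\Sigma^\downarrow(\omega):=\{\eta\in\Sigma\mid\eta\subset\omega\}$, and $\rho[\omega]\propto\mathbb{P}_x[\omega]$ ($\omega\in\Omega$), $\gamma[\eta]\propto1$ ($\eta\in\Sigma$). Let $\mathscr{P}$ be the probability measure on $\Omega\times\Sigma$ with $\mathscr{P}[\omega,\eta]\propto\rho[\omega]\gamma[\eta]\mathbf{1}[\eta\in f(\omega)]$. Then: (a) The marginal $\mathscr{P}_\Sigma$ on $\Sigma$ satisfies $\mathscr{P}_\Sigma[\eta]\propto\prod_{e\in\eta}x_e$. For each $\omega$ with $\mathscr{P}_\Omega[\omega]\neq0$, $\mathscr{P}[\cdot\mid\omega]$ is the uniform measure on $\Sigma^\downarrow(\omega)$. (b) The marginal on $\Omega$ is $\mathscr{P}_\Omega=\mathscr{P}_\Sigma\cup\mathbb{P}_x$. For each $\eta\in\Sigma$ with $\mathscr{P}_\Sigma[\eta]\neq0$, $\mathscr{P}[\cdot\mid\eta]=\mathbb{P}_x\cup\delta_\eta$.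
   Context: Elements of $\{0,1\}^E$ are identified with subsets of $E$. $\mathbb{P}_x$ is Bernoulli percolation with edge $e$ open independently with probability $x_e$; $\delta_\eta$ is the Dirac mass at $\eta$; for measures $\pi,\nu$ on $\{0,1\}^E$, $\pi\cup\nu$ is the law of the union of independent samples of $\pi$ and $\nu$. *)

theory Defs
  imports "HOL-Probability.Probability"
begin

definition perc :: "'e set \<Rightarrow> ('e \<Rightarrow> real) \<Rightarrow> 'e set pmf" where
  "perc E x = map_pmf (\<lambda>b. {e \<in> E. b e}) (Pi_pmf E False (\<lambda>e. bernoulli_pmf (x e)))"

definition union_pmf :: "'e set pmf \<Rightarrow> 'e set pmf \<Rightarrow> 'e set pmf" where
  "union_pmf \<pi> \<nu> = map_pmf (\<lambda>(a, b). a \<union> b) (pair_pmf \<pi> \<nu>)"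

definition down :: "'e set set \<Rightarrow> 'e set \<Rightarrow> 'e set set" where
  "down \<Sigma> \<omega> = {\<eta> \<in> \<Sigma>. \<eta> \<subseteq> \<omega>}"

definition joint :: "'e set \<Rightarrow> ('e \<Rightarrow> real) \<Rightarrow> 'e set set \<Rightarrow> ('e set \<times> 'e set) pmf" where
  "joint E x \<Sigma> = cond_pmf (pair_pmf (perc E x) (pmf_of_set \<Sigma>)) {(\<omega>, \<eta>). \<eta> \<in> down \<Sigma> \<omega>}"

end

theory Submission
  imports Defs
begin

(* The joint law has mass c * P_x[omega] at every pair (omega, eta) with eta in Sigma and
   eta a subset of omega, and no mass elsewhere.  Summing over eta gives the Omega-marginal
   c * |Sigma_down(omega)| * P_x[omega], so the conditional law given omega is uniform on
   Sigma_down(omega).  The key identity is that restricting P_x to the event that eta is open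
   amounts to forcing the edges of eta open: P_x \<union> delta_eta is percolation with x_e
   replaced by 1 on eta, whence 1[eta <= omega] P_x[omega] = (prod_{e in eta} x_e) *
   (P_x \<union> delta_eta)[omega].  Summing this identity over omega gives the Sigma-marginal
   c * prod_{e in eta} x_e, dividing by that marginal gives the conditional law given eta, and
   averaging P_x \<union> delta_eta against the Sigma-marginal gives the Omega-marginal. *)

lemma map_Pi_pmf_componentwise:
  assumes "finite A" and "\<And>i. i \<notin> A \<Longrightarrow> g i d = d'"
  shows "map_pmf (\<lambda>f i. g i (f i)) (Pi_pmf A d p) = Pi_pmf A d' (\<lambda>i. map_pmf (g i) (p i))"
proof -
  have "Pi_pmf A d' (\<lambda>i. map_pmf (g i) (p i))
      = Pi_pmf A d p \<bind> (\<lambda>f. Pi_pmf A d' (\<lambda>i. return_pmf (g i (f i))))"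
    unfolding map_pmf_def by (rule Pi_pmf_bind[OF assms(1)])
  also have "\<dots> = map_pmf (\<lambda>f i. g i (f i)) (Pi_pmf A d p)"
    unfolding map_pmf_def using set_Pi_pmf_subset[OF assms(1), of d p] assms
    by (intro bind_pmf_cong refl) (auto simp: fun_eq_iff)
  finally show ?thesis ..
qed

lemma bernoulli_pmf_1: "bernoulli_pmf 1 = return_pmf True"
  by (rule pmf_eqI) (simp split: split_indicator)

lemma pmf_map_snd_eq_sum:
  assumes "finite A" and "fst ` set_pmf P \<subseteq> A"
  shows "pmf (map_pmf snd P) b = (\<Sum>a\<in>A. pmf P (a, b))"
proof -
  have "pmf (map_pmf snd P) b = measure_pmf.prob P (snd -` {b} \<inter> set_pmf P)"
    by (simp add: pmf_map measure_Int_set_pmf)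
  also have "snd -` {b} \<inter> set_pmf P = (A \<times> {b}) \<inter> set_pmf P"
    using assms(2) by force
  also have "measure_pmf.prob P \<dots> = (\<Sum>a\<in>A. pmf P (a, b))"
    using assms(1) by (simp add: measure_Int_set_pmf measure_measure_pmf_finite sum.cartesian_product')
  finally show ?thesis .
qed

lemma pmf_map_fst_eq_sum:
  assumes "finite B" and "snd ` set_pmf P \<subseteq> B"
  shows "pmf (map_pmf fst P) a = (\<Sum>b\<in>B. pmf P (a, b))"
proof -
  have "pmf (map_pmf fst P) a = measure_pmf.prob P (fst -` {a} \<inter> set_pmf P)"
    by (simp add: pmf_map measure_Int_set_pmf)
  also have "fst -` {a} \<inter> set_pmf P = ({a} \<times> B) \<inter> set_pmf P"
    using assms(2) by force
  also have "measure_pmf.prob P \<dots> = (\<Sum>b\<in>B. pmf P (a, b))"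
    using assms(1) by (simp add: measure_Int_set_pmf measure_measure_pmf_finite sum.cartesian_product')
  finally show ?thesis .
qed

lemma pmf_map_snd_cond_fst:
  assumes "pmf (map_pmf fst P) a \<noteq> 0"
  shows "pmf (map_pmf snd (cond_pmf P {p. fst p = a})) b = pmf P (a, b) / pmf (map_pmf fst P) a"
proof -
  have ne: "set_pmf P \<inter> {p. fst p = a} \<noteq> {}"
    using assms by (auto simp: pmf_eq_0_set_pmf)
  have "pmf (map_pmf snd (cond_pmf P {p. fst p = a})) b = (\<Sum>a'\<in>{a}. pmf (cond_pmf P {p. fst p = a}) (a', b))"
    by (rule pmf_map_snd_eq_sum) (auto simp: set_cond_pmf[OF ne])
  then show ?thesis
    by (simp add: pmf_cond[OF ne] pmf_map vimage_def)
qed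

lemma pmf_map_fst_cond_snd:
  assumes "pmf (map_pmf snd P) b \<noteq> 0"
  shows "pmf (map_pmf fst (cond_pmf P {p. snd p = b})) a = pmf P (a, b) / pmf (map_pmf snd P) b"
proof -
  have ne: "set_pmf P \<inter> {p. snd p = b} \<noteq> {}"
    using assms by (auto simp: pmf_eq_0_set_pmf)
  have "pmf (map_pmf fst (cond_pmf P {p. snd p = b})) a = (\<Sum>b'\<in>{b}. pmf (cond_pmf P {p. snd p = b}) (a, b'))"
    by (rule pmf_map_fst_eq_sum) (auto simp: set_cond_pmf[OF ne])
  then show ?thesis
    by (simp add: pmf_cond[OF ne] pmf_map vimage_def)
qed

lemma union_pmf_return_pmf: "union_pmf \<nu> (return_pmf \<eta>) = map_pmf (\<lambda>\<omega>. \<omega> \<union> \<eta>) \<nu>"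
  by (simp add: union_pmf_def pair_return_pmf2 map_pmf_comp)

lemma pmf_union_pmf:
  assumes "finite A" and "set_pmf \<mu> \<subseteq> A"
  shows "pmf (union_pmf \<mu> \<nu>) \<omega> = (\<Sum>\<eta>\<in>A. pmf \<mu> \<eta> * pmf (union_pmf \<nu> (return_pmf \<eta>)) \<omega>)"
proof -
  have union_eq_bind: "union_pmf \<mu> \<nu> = bind_pmf \<mu> (\<lambda>\<eta>. union_pmf \<nu> (return_pmf \<eta>))"
    by (simp add: union_pmf_def union_pmf_return_pmf pair_pmf_def map_bind_pmf bind_return_pmf Un_commute)
  have "(\<integral>\<eta>. pmf (union_pmf \<nu> (return_pmf \<eta>)) \<omega> \<partial>\<mu>)
      = (\<Sum>\<eta>\<in>A. pmf \<mu> \<eta> *\<^sub>R pmf (union_pmf \<nu> (return_pmf \<eta>)) \<omega>)"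
    by (rule integral_measure_pmf[OF assms(1)]) (use assms in auto)
  then show ?thesis
    unfolding pmf_bind union_eq_bind by simp
qed

lemma perc_eq_map_Collect:
  assumes "finite E"
  shows "perc E x = map_pmf Collect (Pi_pmf E False (\<lambda>e. bernoulli_pmf (x e)))"
  unfolding perc_def
proof (intro map_pmf_cong refl)
  fix b assume "b \<in> set_pmf (Pi_pmf E False (\<lambda>e. bernoulli_pmf (x e)))"
  then have "\<forall>e. e \<notin> E \<longrightarrow> b e = False"
    using set_Pi_pmf_subset[OF assms, of False] by auto
  then show "{e \<in> E. b e} = Collect b" by auto
qed

lemma set_pmf_perc: "finite E \<Longrightarrow> set_pmf (perc E x) \<subseteq> Pow E"
  unfolding perc_def by auto

lemma pmf_perc:
  assumes fin: "finite E" and x: "\<forall>e\<in>E. 0 \<le> x e \<and> x e \<le> 1"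
  shows "pmf (perc E x) \<omega> = (if \<omega> \<subseteq> E then \<Prod>e\<in>E. if e \<in> \<omega> then x e else 1 - x e else 0)"
proof -
  have "inj (Collect :: ('e \<Rightarrow> bool) \<Rightarrow> 'e set)"
    by (rule injI) (simp add: set_eq_iff fun_eq_iff)
  from pmf_map_inj'[OF this, of _ "\<lambda>e. e \<in> \<omega>"]
  have "pmf (perc E x) \<omega> = pmf (Pi_pmf E False (\<lambda>e. bernoulli_pmf (x e))) (\<lambda>e. e \<in> \<omega>)"
    by (simp add: perc_eq_map_Collect[OF fin])
  also have "\<dots> = (if \<omega> \<subseteq> E then \<Prod>e\<in>E. pmf (bernoulli_pmf (x e)) (e \<in> \<omega>) else 0)"
    by (auto simp: pmf_Pi[OF fin])
  also have "\<dots> = (if \<omega> \<subseteq> E then \<Prod>e\<in>E. if e \<in> \<omega> then x e else 1 - x e else 0)"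
    using x by (intro if_cong prod.cong refl) simp_all
  finally show ?thesis .
qed

lemma perc_union_return_pmf:
  assumes "finite E" and "\<eta> \<subseteq> E"
  shows "union_pmf (perc E x) (return_pmf \<eta>) = perc E (\<lambda>e. if e \<in> \<eta> then 1 else x e)"
proof -
  let ?bern = "\<lambda>y e. bernoulli_pmf (y e)"
  have "(\<lambda>b. Collect b \<union> \<eta>) = (\<lambda>b. Collect (\<lambda>e. b e \<or> e \<in> \<eta>))" by auto
  then have "union_pmf (perc E x) (return_pmf \<eta>)
      = map_pmf Collect (map_pmf (\<lambda>b e. b e \<or> e \<in> \<eta>) (Pi_pmf E False (?bern x)))"
    by (simp only: union_pmf_return_pmf perc_eq_map_Collect[OF assms(1)] map_pmf_comp)
  also have "map_pmf (\<lambda>b e. b e \<or> e \<in> \<eta>) (Pi_pmf E False (?bern x))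
      = Pi_pmf E False (\<lambda>e. map_pmf (\<lambda>v. v \<or> e \<in> \<eta>) (bernoulli_pmf (x e)))"
    using assms by (intro map_Pi_pmf_componentwise) auto
  also have "\<dots> = Pi_pmf E False (?bern (\<lambda>e. if e \<in> \<eta> then 1 else x e))"
    by (intro Pi_pmf_cong) (auto simp: bernoulli_pmf_1)
  finally show ?thesis
    by (simp add: perc_eq_map_Collect[OF assms(1)])
qed

lemma prod_mult_pmf_perc_union_return_pmf:
  assumes fin: "finite E" and x: "\<forall>e\<in>E. 0 \<le> x e \<and> x e \<le> 1" and "\<eta> \<subseteq> E"
  shows "(\<Prod>e\<in>\<eta>. x e) * pmf (union_pmf (perc E x) (return_pmf \<eta>)) \<omega>
       = (if \<eta> \<subseteq> \<omega> then pmf (perc E x) \<omega> else 0)"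
proof (cases "\<omega> \<subseteq> E")
  case False
  then show ?thesis
    using assms by (simp add: perc_union_return_pmf pmf_perc)
next
  case True
  define q where "q y e = (if e \<in> \<omega> then y e else (1::real) - y e)" for y e
  let ?x' = "\<lambda>e. if e \<in> \<eta> then 1 else x e"
  have prod_split: "(\<Prod>e\<in>E. q y e) = (\<Prod>e\<in>E - \<eta>. q y e) * (\<Prod>e\<in>\<eta>. q y e)" for y
    using prod.subset_diff[OF \<open>\<eta> \<subseteq> E\<close> fin] .
  have "pmf (union_pmf (perc E x) (return_pmf \<eta>)) \<omega> = (\<Prod>e\<in>E. q ?x' e)"
    using assms True by (simp add: perc_union_return_pmf pmf_perc q_def)
  also have "\<dots> = (\<Prod>e\<in>E - \<eta>. q x e) * (\<Prod>e\<in>\<eta>. if e \<in> \<omega> then 1 else 0)"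
    unfolding prod_split by (intro arg_cong2[where f = times] prod.cong) (auto simp: q_def)
  finally have union: "pmf (union_pmf (perc E x) (return_pmf \<eta>)) \<omega>
      = (\<Prod>e\<in>E - \<eta>. q x e) * (\<Prod>e\<in>\<eta>. if e \<in> \<omega> then 1 else 0)" .
  have perc: "pmf (perc E x) \<omega> = (\<Prod>e\<in>E - \<eta>. q x e) * (\<Prod>e\<in>\<eta>. q x e)"
    unfolding prod_split[symmetric] using assms True by (simp add: pmf_perc q_def)
  show ?thesis
  proof (cases "\<eta> \<subseteq> \<omega>")
    case True
    then have "(\<Prod>e\<in>\<eta>. q x e) = (\<Prod>e\<in>\<eta>. x e)"
      by (intro prod.cong) (auto simp: q_def)
    with True show ?thesis by (simp add: union perc subset_iff)
  next
    case False
    then have "(\<Prod>e\<in>\<eta>. if e \<in> \<omega> then 1 else 0 :: real) = 0"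
      using fin \<open>\<eta> \<subseteq> E\<close> by (intro prod_zero) (auto intro: finite_subset)
    with False show ?thesis by (simp add: union)
  qed
qed

lemma sum_pmf_perc_supsets:
  assumes fin: "finite E" and x: "\<forall>e\<in>E. 0 \<le> x e \<and> x e \<le> 1" and "\<eta> \<subseteq> E"
  shows "(\<Sum>\<omega>\<in>Pow E. if \<eta> \<subseteq> \<omega> then pmf (perc E x) \<omega> else 0) = (\<Prod>e\<in>\<eta>. x e)"
proof -
  have "(\<Sum>\<omega>\<in>Pow E. if \<eta> \<subseteq> \<omega> then pmf (perc E x) \<omega> else 0)
      = (\<Prod>e\<in>\<eta>. x e) * (\<Sum>\<omega>\<in>Pow E. pmf (union_pmf (perc E x) (return_pmf \<eta>)) \<omega>)"
    using assms by (simp add: sum_distrib_left prod_mult_pmf_perc_union_return_pmf)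
  also have "(\<Sum>\<omega>\<in>Pow E. pmf (union_pmf (perc E x) (return_pmf \<eta>)) \<omega>) = 1"
    using assms by (simp add: perc_union_return_pmf sum_pmf_eq_1 set_pmf_perc)
  finally show ?thesis by simp
qed

lemma pmf_cond_pair_uniform_down:
  assumes "finite \<Sigma>" and "\<eta>\<^sub>0 \<in> \<Sigma>" and "\<eta>\<^sub>0 \<subseteq> \<omega>\<^sub>0" and "\<omega>\<^sub>0 \<in> set_pmf \<rho>"
  shows "\<exists>c>0. \<forall>\<omega> \<eta>. pmf (cond_pmf (pair_pmf \<rho> (pmf_of_set \<Sigma>)) {(\<omega>, \<eta>). \<eta> \<in> down \<Sigma> \<omega>}) (\<omega>, \<eta>)
                  = (if \<eta> \<in> \<Sigma> \<and> \<eta> \<subseteq> \<omega> then c * pmf \<rho> \<omega> else 0)"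
proof -
  let ?S = "pair_pmf \<rho> (pmf_of_set \<Sigma>)" and ?A = "{(\<omega>, \<eta>). \<eta> \<in> down \<Sigma> \<omega>}"
  have "\<Sigma> \<noteq> {}" using assms(2) by blast
  then have ne: "set_pmf ?S \<inter> ?A \<noteq> {}"
    using assms by (auto simp: down_def)
  define c where "c = 1 / (card \<Sigma> * measure_pmf.prob ?S ?A)"
  have "measure_pmf.prob ?S ?A > 0"
    using measure_measure_pmf_not_zero[OF ne] by (simp add: order_less_le)
  then have "c > 0"
    using assms(1) \<open>\<Sigma> \<noteq> {}\<close> by (simp add: c_def card_gt_0_iff)
  moreover have "pmf (cond_pmf ?S ?A) (\<omega>, \<eta>) = (if \<eta> \<in> \<Sigma> \<and> \<eta> \<subseteq> \<omega> then c * pmf \<rho> \<omega> else 0)" for \<omega> \<eta>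
    unfolding pmf_cond[OF ne] using assms(1) \<open>\<Sigma> \<noteq> {}\<close> by (simp add: pmf_pair down_def c_def)
  ultimately show ?thesis by blast
qed

locale joint_law =
  fixes E :: "'e set" and x :: "'e \<Rightarrow> real" and \<Sigma> :: "'e set set"
    and c :: real and P :: "('e set \<times> 'e set) pmf"
  assumes finite_E: "finite E" and x_prob: "\<forall>e\<in>E. 0 \<le> x e \<and> x e \<le> 1"
    and \<Sigma>_subset: "\<Sigma> \<subseteq> Pow E"
    and pmf_P: "\<And>\<omega> \<eta>. pmf P (\<omega>, \<eta>) = (if \<eta> \<in> \<Sigma> \<and> \<eta> \<subseteq> \<omega> then c * pmf (perc E x) \<omega> else 0)"
begin

lemma finite_\<Sigma>: "finite \<Sigma>"
  using \<Sigma>_subset finite_E by (meson finite_Pow_iff finite_subset)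

lemma fst_set_pmf: "fst ` set_pmf P \<subseteq> Pow E"
  and snd_set_pmf: "snd ` set_pmf P \<subseteq> \<Sigma>"
proof -
  have "\<omega> \<subseteq> E \<and> \<eta> \<in> \<Sigma>" if "(\<omega>, \<eta>) \<in> set_pmf P" for \<omega> \<eta>
    using that set_pmf_perc[OF finite_E, of x] by (auto simp: set_pmf_iff pmf_P split: if_splits)
  then show "fst ` set_pmf P \<subseteq> Pow E" and "snd ` set_pmf P \<subseteq> \<Sigma>"
    by fastforce+
qed

lemma pmf_map_snd: "pmf (map_pmf snd P) \<eta> = (if \<eta> \<in> \<Sigma> then c * (\<Prod>e\<in>\<eta>. x e) else 0)"
proof -
  have "pmf (map_pmf snd P) \<eta> = (\<Sum>\<omega>\<in>Pow E. pmf P (\<omega>, \<eta>))"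
    using finite_E fst_set_pmf by (intro pmf_map_snd_eq_sum) simp_all
  also have "\<dots> = (if \<eta> \<in> \<Sigma> then c * (\<Sum>\<omega>\<in>Pow E. if \<eta> \<subseteq> \<omega> then pmf (perc E x) \<omega> else 0) else 0)"
    by (auto simp: pmf_P sum_distrib_left intro!: sum.cong)
  finally show ?thesis
    using sum_pmf_perc_supsets[OF finite_E x_prob] \<Sigma>_subset by auto
qed

lemma pmf_map_fst: "pmf (map_pmf fst P) \<omega> = c * card (down \<Sigma> \<omega>) * pmf (perc E x) \<omega>"
proof -
  have "pmf (map_pmf fst P) \<omega> = (\<Sum>\<eta>\<in>\<Sigma>. pmf P (\<omega>, \<eta>))"
    using finite_\<Sigma> snd_set_pmf by (rule pmf_map_fst_eq_sum)
  also have "\<dots> = (\<Sum>\<eta>\<in>down \<Sigma> \<omega>. c * pmf (perc E x) \<omega>)"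
    unfolding down_def using finite_\<Sigma> by (simp add: pmf_P sum.inter_filter[symmetric])
  finally show ?thesis by simp
qed

lemma cond_pmf_fst:
  assumes "pmf (map_pmf fst P) \<omega> \<noteq> 0"
  shows "map_pmf snd (cond_pmf P {p. fst p = \<omega>}) = pmf_of_set (down \<Sigma> \<omega>)"
proof (rule pmf_eqI)
  fix \<eta>
  have "down \<Sigma> \<omega> \<noteq> {}" and "finite (down \<Sigma> \<omega>)"
    using assms finite_\<Sigma> by (auto simp: pmf_map_fst down_def)
  then show "pmf (map_pmf snd (cond_pmf P {p. fst p = \<omega>})) \<eta> = pmf (pmf_of_set (down \<Sigma> \<omega>)) \<eta>"
    using assms by (simp add: pmf_map_snd_cond_fst pmf_P pmf_map_fst) (simp add: down_def)
qed

lemma map_fst_eq_union_pmf: "map_pmf fst P = union_pmf (map_pmf snd P) (perc E x)"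
proof (rule pmf_eqI)
  fix \<omega>
  have "pmf (union_pmf (map_pmf snd P) (perc E x)) \<omega>
      = (\<Sum>\<eta>\<in>\<Sigma>. c * ((\<Prod>e\<in>\<eta>. x e) * pmf (union_pmf (perc E x) (return_pmf \<eta>)) \<omega>))"
    using snd_set_pmf by (subst pmf_union_pmf[OF finite_\<Sigma>]) (auto simp: pmf_map_snd intro!: sum.cong)
  also have "\<dots> = (\<Sum>\<eta>\<in>\<Sigma>. if \<eta> \<subseteq> \<omega> then c * pmf (perc E x) \<omega> else 0)"
  proof (intro sum.cong refl)
    fix \<eta> assume "\<eta> \<in> \<Sigma>"
    then have "\<eta> \<subseteq> E" using \<Sigma>_subset by blast
    then show "c * ((\<Prod>e\<in>\<eta>. x e) * pmf (union_pmf (perc E x) (return_pmf \<eta>)) \<omega>)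
        = (if \<eta> \<subseteq> \<omega> then c * pmf (perc E x) \<omega> else 0)"
      by (simp add: prod_mult_pmf_perc_union_return_pmf[OF finite_E x_prob])
  qed
  also have "\<dots> = pmf (map_pmf fst P) \<omega>"
    unfolding pmf_map_fst down_def using finite_\<Sigma> by (simp add: sum.inter_filter[symmetric])
  finally show "pmf (map_pmf fst P) \<omega> = pmf (union_pmf (map_pmf snd P) (perc E x)) \<omega>" ..
qed

lemma cond_pmf_snd:
  assumes "\<eta> \<in> \<Sigma>" and "pmf (map_pmf snd P) \<eta> \<noteq> 0"
  shows "map_pmf fst (cond_pmf P {p. snd p = \<eta>}) = union_pmf (perc E x) (return_pmf \<eta>)"
proof (rule pmf_eqI)
  fix \<omega>
  have "c \<noteq> 0" and "(\<Prod>e\<in>\<eta>. x e) \<noteq> 0"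
    using assms by (auto simp: pmf_map_snd)
  moreover have "(\<Prod>e\<in>\<eta>. x e) * pmf (union_pmf (perc E x) (return_pmf \<eta>)) \<omega>
      = (if \<eta> \<subseteq> \<omega> then pmf (perc E x) \<omega> else 0)"
    using assms(1) \<Sigma>_subset by (intro prod_mult_pmf_perc_union_return_pmf[OF finite_E x_prob]) auto
  ultimately show "pmf (map_pmf fst (cond_pmf P {p. snd p = \<eta>})) \<omega>
      = pmf (union_pmf (perc E x) (return_pmf \<eta>)) \<omega>"
    using assms by (simp add: pmf_map_fst_cond_snd pmf_P pmf_map_snd field_simps)
qed

end

theorem corollary3p2:
  fixes E :: "'e set" and x :: "'e \<Rightarrow> real" and \<Sigma> :: "'e set set"
  assumes "finite E"
    and "\<forall>e\<in>E. 0 < x e \<and> x e < 1"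
    and "\<Sigma> \<subseteq> Pow E" and "\<Sigma> \<noteq> {}"
  defines "P \<equiv> joint E x \<Sigma>"
  shows "(\<exists>c>0. \<forall>\<eta>. pmf (map_pmf snd P) \<eta> = (if \<eta> \<in> \<Sigma> then c * (\<Prod>e\<in>\<eta>. x e) else 0))
       \<and> (\<forall>\<omega>. pmf (map_pmf fst P) \<omega> \<noteq> 0 \<longrightarrow>
            map_pmf snd (cond_pmf P {p. fst p = \<omega>}) = pmf_of_set (down \<Sigma> \<omega>))
       \<and> map_pmf fst P = union_pmf (map_pmf snd P) (perc E x)
       \<and> (\<forall>\<eta>\<in>\<Sigma>. pmf (map_pmf snd P) \<eta> \<noteq> 0 \<longrightarrow>
            map_pmf fst (cond_pmf P {p. snd p = \<eta>}) = union_pmf (perc E x) (return_pmf \<eta>))"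
proof -
  have x_prob: "\<forall>e\<in>E. 0 \<le> x e \<and> x e \<le> 1"
    using assms(2) by auto
  have "pmf (perc E x) E > 0"
    using assms(2) by (auto simp: pmf_perc[OF assms(1) x_prob] intro!: prod_pos)
  then have E_in_support: "E \<in> set_pmf (perc E x)"
    by (simp add: set_pmf_iff)
  obtain \<eta>\<^sub>0 where "\<eta>\<^sub>0 \<in> \<Sigma>" and "\<eta>\<^sub>0 \<subseteq> E"
    using assms(3,4) by blast
  moreover have "finite \<Sigma>"
    using assms(1,3) by (meson finite_Pow_iff finite_subset)
  ultimately obtain c where "c > 0" and pmf_P:
    "\<forall>\<omega> \<eta>. pmf P (\<omega>, \<eta>) = (if \<eta> \<in> \<Sigma> \<and> \<eta> \<subseteq> \<omega> then c * pmf (perc E x) \<omega> else 0)"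
    using pmf_cond_pair_uniform_down[OF _ _ _ E_in_support] unfolding P_def joint_def by blast
  then interpret joint_law E x \<Sigma> c P
    using assms(1,3) x_prob by unfold_locales auto
  show ?thesis
    using \<open>c > 0\<close> pmf_map_snd cond_pmf_fst map_fst_eq_union_pmf cond_pmf_snd by blast
qed

end
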